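(* Let $N\ge3$, $\mu\ge0$, let $K$ satisfy (K$\infty$) and $f$ satisfy (F$\infty$), and let $p>p_S(\beta)$. Let $t_1\in\mathbb{R}$ and let $\tilde w\in C^2(t_1,\infty)$ be a positive solution of $$\tilde w''+\tilde a\tilde w'-\tilde A^{p-1}\tilde w+\tilde L(t)\tilde w^p+\mu\tilde g(t)=0\quad(t>t_1)$$ with $0<\limsup_{t\to\infty}\tilde w(t)<\infty$. Then $\lim_{t\to\infty}\tilde w(t)=\tilde\gamma$ and $\lim_{t\to\infty}\tilde w'(t)=0$.
   Context: (K$\infty$): $K:(0,\infty)\to(0,\infty)$ is continuous and $K(r)=(k_\infty+o(1))r^{\beta}$ as $r\to\infty$ for some $\beta>-2$, $k_\infty>0$. (F$\infty$): $f:(0,\infty)\to[0,\infty)$ is continuous and $f(r)=O(r^{-q})$ as $r\to\infty$ for some $q>N$. $p_S(\beta)=\frac{N+2+2\beta}{N-2}$, $\tilde\theta:=\frac{2+\beta}{p-1}$, $\tilde c:=N-2-\tilde\theta$, $\tilde a:=N-2-2\tilde\theta$, $\tilde A:=(\tilde\theta\tilde c)^{1/(p-1)}$, $\tilde\gamma:=k_\infty^{-1/(p-1)}\tilde A$, $\tilde L(t):=e^{-\beta t}K(e^t)$, $\tilde g(t):=e^{(2+\tilde\theta)t}f(e^t)$. (This equation is satisfied by $\tilde w(t)=e^{\tilde\theta t}u(e^t)$ when $u$ solves $u''+\frac{N-1}{r}u'+K(r)u^p+\mu f(r)=0$.) *)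

theory Defs
  imports "HOL-Analysis.Analysis" "HOL-Library.Landau_Symbols"
begin

definition pS :: "nat \<Rightarrow> real \<Rightarrow> real" where
  "pS N \<beta> = (real N + 2 + 2 * \<beta>) / (real N - 2)"

definition theta_t :: "real \<Rightarrow> real \<Rightarrow> real" where
  "theta_t \<beta> p = (2 + \<beta>) / (p - 1)"

definition c_t :: "nat \<Rightarrow> real \<Rightarrow> real \<Rightarrow> real" where
  "c_t N \<beta> p = real N - 2 - theta_t \<beta> p"

definition a_t :: "nat \<Rightarrow> real \<Rightarrow> real \<Rightarrow> real" where
  "a_t N \<beta> p = real N - 2 - 2 * theta_t \<beta> p"

definition A_t :: "nat \<Rightarrow> real \<Rightarrow> real \<Rightarrow> real" where
  "A_t N \<beta> p = (theta_t \<beta> p * c_t N \<beta> p) powr (1 / (p - 1))"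

definition gamma_t :: "nat \<Rightarrow> real \<Rightarrow> real \<Rightarrow> real \<Rightarrow> real" where
  "gamma_t N \<beta> p kinf = kinf powr (- 1 / (p - 1)) * A_t N \<beta> p"

definition L_t :: "(real \<Rightarrow> real) \<Rightarrow> real \<Rightarrow> real \<Rightarrow> real" where
  "L_t K \<beta> t = exp (- \<beta> * t) * K (exp t)"

definition g_t :: "(real \<Rightarrow> real) \<Rightarrow> real \<Rightarrow> real \<Rightarrow> real \<Rightarrow> real" where
  "g_t f \<beta> p t = exp ((2 + theta_t \<beta> p) * t) * f (exp t)"

end

theory Submission
  imports Defs "HOL-Real_Asymp.Real_Asymp"
begin

text \<open>
  With \<open>k = kinf\<close> the equation reads \<open>w'' + a w' = \<alpha> w - k w\<^sup>p + e(t)\<close> with \<open>e(t) \<rightarrow> 0\<close>, and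
  the force \<open>\<alpha> s - k s\<^sup>p\<close> vanishes on \<open>s \<ge> 0\<close> only at \<open>0\<close> and \<open>\<gamma>\<close>. The energy
  \<open>E = w'\<^sup>2/2 + F(w)\<close>, with \<open>F' = -(\<alpha> s - k s\<^sup>p)\<close>, satisfies \<open>E' = -a w'\<^sup>2 + e w'\<close>.
  Once \<open>|e| \<le> \<epsilon>\<close>, \<open>E\<close> rises at rate at most \<open>\<epsilon>\<^sup>2/(4a)\<close>; on a unit time window where \<open>w'\<close>
  stays small, \<open>w\<close> is close to \<open>0\<close> or \<open>\<gamma>\<close>, so \<open>E\<close> is close to a critical value \<open>0\<close> or
  \<open>F(\<gamma>)\<close>; otherwise the dissipation \<open>a w'\<^sup>2\<close> makes \<open>E\<close> drop by a fixed amount. Hence \<open>E\<close>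
  cannot cross an interval of values avoiding the critical values, and being bounded it
  converges. Convergence of \<open>E\<close> forces \<open>w' \<rightarrow> 0\<close>, so \<open>w\<close> eventually stays near \<open>0\<close> or
  near \<open>\<gamma>\<close>; as \<open>w\<close> exceeds a fixed \<open>y0 > 0\<close> infinitely often and is continuous, it is
  trapped near \<open>\<gamma>\<close>.
\<close>

section \<open>Estimates for real functions\<close>

lemma subinterval_avoiding_finite_set:
  fixes x1 x2 :: real
  assumes "x1 < x2" and "finite S"
  obtains c1 c2 \<rho> where "x1 < c1" "c1 < c2" "c2 < x2" "0 < \<rho>"
    and "\<And>x s. c1 \<le> x \<Longrightarrow> x \<le> c2 \<Longrightarrow> s \<in> S \<Longrightarrow> \<rho> \<le> \<bar>x - s\<bar>"
proof -
  have "infinite ({x1<..<x2} - S)"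
    using infinite_Ioo[OF assms(1)] assms(2) by (rule Diff_infinite_finite[rotated])
  then obtain c where c: "c \<in> {x1<..<x2} - S"
    by (metis ex_in_conv finite.emptyI)
  have "open ({x1<..<x2} - S)"
    using assms(2) by (intro open_Diff finite_imp_closed) auto
  then obtain \<delta> where \<delta>: "0 < \<delta>" "ball c \<delta> \<subseteq> {x1<..<x2} - S"
    using c by (meson openE)
  show thesis
  proof (rule that[of "c - \<delta> / 2" "c + \<delta> / 2" "\<delta> / 2"])
    have "{c - \<delta> / 2, c + \<delta> / 2} \<subseteq> ball c \<delta>"
      using \<delta>(1) by (auto simp: dist_real_def)
    then have "{c - \<delta> / 2, c + \<delta> / 2} \<subseteq> {x1<..<x2}"
      using \<delta>(2) by blast
    then show "x1 < c - \<delta> / 2" "c + \<delta> / 2 < x2"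
      by auto
    show "c - \<delta> / 2 < c + \<delta> / 2" "0 < \<delta> / 2"
      using \<delta>(1) by auto
    fix x s assume "c - \<delta> / 2 \<le> x" "x \<le> c + \<delta> / 2" "s \<in> S"
    moreover have "s \<notin> ball c \<delta>"
      using \<delta>(2) \<open>s \<in> S\<close> by auto
    ultimately show "\<delta> / 2 \<le> \<bar>x - s\<bar>"
      by (auto simp: dist_real_def abs_if split: if_splits)
  qed
qed

lemma diff_le_of_DERIV_le:
  fixes f f' :: "real \<Rightarrow> real"
  assumes "a \<le> b"
    and "\<And>x. a \<le> x \<Longrightarrow> x \<le> b \<Longrightarrow> (f has_real_derivative f' x) (at x)"
    and "\<And>x. a \<le> x \<Longrightarrow> x \<le> b \<Longrightarrow> f' x \<le> C"
  shows "f b - f a \<le> C * (b - a)"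
proof -
  have "f b - C * b \<le> f a - C * a"
  proof (rule DERIV_nonpos_imp_nonincreasing[OF assms(1), of "\<lambda>x. f x - C * x"])
    fix x assume "a \<le> x" "x \<le> b"
    then show "\<exists>d. ((\<lambda>x. f x - C * x) has_real_derivative d) (at x) \<and> d \<le> 0"
      using assms(2,3) by (intro exI[of _ "f' x - C"]) (auto intro!: derivative_eq_intros)
  qed
  then show ?thesis
    by (simp add: algebra_simps)
qed

lemma abs_diff_le_of_DERIV_bounded:
  fixes f f' :: "real \<Rightarrow> real"
  assumes "convex S" and "\<And>x. x \<in> S \<Longrightarrow> (f has_real_derivative f' x) (at x)"
    and "\<And>x. x \<in> S \<Longrightarrow> \<bar>f' x\<bar> \<le> B" and "x \<in> S" "y \<in> S"
  shows "\<bar>f x - f y\<bar> \<le> B * \<bar>x - y\<bar>"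
proof -
  have "norm (f x - f y) \<le> B * norm (x - y)"
    by (rule field_differentiable_bound[OF assms(1) _ _ assms(4,5)])
      (auto intro: has_field_derivative_at_within assms(2) simp: assms(3))
  then show ?thesis
    by simp
qed

lemma le_max_of_damped_DERIV:
  fixes y y' :: "real \<Rightarrow> real"
  assumes "0 < a" and "T0 \<le> t"
    and DERIV_y: "\<And>s. T0 \<le> s \<Longrightarrow> (y has_real_derivative y' s) (at s)"
    and damped: "\<And>s. T0 \<le> s \<Longrightarrow> y' s + a * y s \<le> H"
  shows "y t \<le> max (y T0) (H / a)"
proof -
  define u where "u s = exp (a * s) * (y s - H / a)" for s
  have "u t \<le> u T0"
  proof (rule DERIV_nonpos_imp_nonincreasing[OF \<open>T0 \<le> t\<close>])
    fix s assume "T0 \<le> s" "s \<le> t"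
    have "(u has_real_derivative exp (a * s) * (y' s + a * y s - H)) (at s)"
      unfolding u_def using DERIV_y[OF \<open>T0 \<le> s\<close>] \<open>0 < a\<close>
      by (auto intro!: derivative_eq_intros simp: field_simps)
    moreover have "exp (a * s) * (y' s + a * y s - H) \<le> 0"
      using damped[OF \<open>T0 \<le> s\<close>] by (simp add: mult_nonneg_nonpos)
    ultimately show "\<exists>d. (u has_real_derivative d) (at s) \<and> d \<le> 0"
      by blast
  qed
  then have "exp (a * t) * (y t - H / a) \<le> exp (a * T0) * max 0 (y T0 - H / a)"
    unfolding u_def by (elim order_trans) (intro mult_left_mono, auto)
  also have "\<dots> \<le> exp (a * t) * max 0 (y T0 - H / a)"
    using assms(1,2) by (intro mult_right_mono) auto
  finally show ?thesis
    by (simp add: mult_le_cancel_left)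
qed

lemma abs_le_of_damped_DERIV:
  fixes y y' :: "real \<Rightarrow> real"
  assumes "0 < a" and "T0 \<le> t"
    and DERIV_y: "\<And>s. T0 \<le> s \<Longrightarrow> (y has_real_derivative y' s) (at s)"
    and damped: "\<And>s. T0 \<le> s \<Longrightarrow> \<bar>y' s + a * y s\<bar> \<le> H"
  shows "\<bar>y t\<bar> \<le> \<bar>y T0\<bar> + H / a"
proof -
  have "y t \<le> max (y T0) (H / a)"
    by (rule le_max_of_damped_DERIV[OF assms(1,2) DERIV_y]) (use damped in \<open>auto simp: abs_le_iff\<close>)
  moreover have "- y t \<le> max (- y T0) (H / a)"
    by (rule le_max_of_damped_DERIV[OF assms(1,2), of "\<lambda>s. - y s" "\<lambda>s. - y' s"])
      (use DERIV_y damped in \<open>auto intro: DERIV_minus simp: abs_le_iff\<close>)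
  moreover have "0 \<le> H / a"
    using damped[of T0] assms(1) by simp
  ultimately show ?thesis
    by (simp add: abs_le_iff) linarith
qed

lemma dissipation_rate_le:
  fixes a b v \<epsilon> :: real
  assumes "0 < a" and "\<bar>b\<bar> \<le> \<epsilon>"
  shows "- a * v\<^sup>2 + b * v \<le> \<epsilon>\<^sup>2 / (4 * a)"
proof -
  have "4 * a * (- a * v\<^sup>2 + b * v) = b\<^sup>2 - (2 * a * v - b)\<^sup>2"
    by (simp add: power2_eq_square algebra_simps)
  also have "\<dots> \<le> b\<^sup>2"
    by simp
  also have "\<dots> \<le> \<epsilon>\<^sup>2"
    using assms(2) power_mono[of "\<bar>b\<bar>" \<epsilon> 2] by simp
  finally show ?thesis
    using assms(1) by (simp add: pos_le_divide_eq mult.commute)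
qed

lemma dissipation_rate_le_neg:
  fixes a b v \<eta> :: real
  assumes "0 < a" and "0 < \<eta>" and "\<bar>b\<bar> \<le> a * \<eta> / 4" and "\<eta> / 2 \<le> \<bar>v\<bar>"
  shows "- a * v\<^sup>2 + b * v \<le> - (a * \<eta>\<^sup>2 / 8)"
proof -
  have "b * v \<le> \<bar>b\<bar> * \<bar>v\<bar>"
    by (simp add: abs_mult[symmetric])
  also have "\<dots> \<le> a * \<eta> / 4 * \<bar>v\<bar>"
    using assms(3) by (intro mult_right_mono) auto
  finally have "b * v \<le> a * \<eta> / 4 * \<bar>v\<bar>" .
  moreover have "0 \<le> a * ((\<bar>v\<bar> - \<eta> / 2) * (\<bar>v\<bar> + \<eta> / 4))"
    using assms by (intro mult_nonneg_nonneg) auto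
  moreover have "a * ((\<bar>v\<bar> - \<eta> / 2) * (\<bar>v\<bar> + \<eta> / 4)) = a * v\<^sup>2 - a * \<eta> / 4 * \<bar>v\<bar> - a * \<eta>\<^sup>2 / 8"
    by (simp add: algebra_simps power2_eq_square)
  ultimately show ?thesis
    by linarith
qed

lemma no_upcrossing_of_bounded_rise_and_drop:
  fixes f :: "real \<Rightarrow> real"
  assumes "0 < H" and gap: "c1 + 2 * \<delta> < c2"
    and rise: "\<And>x y. T \<le> x \<Longrightarrow> x \<le> y \<Longrightarrow> y \<le> x + H \<Longrightarrow> f y \<le> f x + \<delta>"
    and drop: "\<And>t. T \<le> t \<Longrightarrow> c1 \<le> f t \<Longrightarrow> f t \<le> c2 \<Longrightarrow> f (t + H) \<le> f t"
    and "T \<le> s" "f s \<le> c1" "s \<le> t"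
  shows "f t < c2"
proof -
  have "0 \<le> \<delta>"
    using rise[of s s] \<open>T \<le> s\<close> \<open>0 < H\<close> by simp
  have grid: "f (s + real n * H) \<le> c1 + \<delta>" for n
  proof (induction n)
    case 0
    then show ?case
      using \<open>f s \<le> c1\<close> \<open>0 \<le> \<delta>\<close> by simp
  next
    case (Suc n)
    define u where "u = s + real n * H"
    have "T \<le> u"
      using \<open>T \<le> s\<close> \<open>0 < H\<close> unfolding u_def by (simp add: add_increasing2)
    have "f (u + H) \<le> c1 + \<delta>"
    proof (cases "f u < c1")
      case True
      then show ?thesis
        using rise[of u "u + H"] \<open>T \<le> u\<close> \<open>0 < H\<close> by simp
    next
      case False
      then show ?thesis
        using drop[OF \<open>T \<le> u\<close>] Suc.IH gap \<open>0 \<le> \<delta>\<close> by (simp add: u_def)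
    qed
    then show ?case
      by (simp add: u_def algebra_simps)
  qed
  define n where "n = nat \<lfloor>(t - s) / H\<rfloor>"
  have "real n \<le> (t - s) / H" "(t - s) / H < real n + 1"
    using \<open>s \<le> t\<close> \<open>0 < H\<close> unfolding n_def by (simp_all add: of_nat_floor)
  then have "s + real n * H \<le> t" "t \<le> s + real n * H + H"
    using \<open>0 < H\<close> by (simp_all add: field_simps)
  then have "f t \<le> f (s + real n * H) + \<delta>"
    using \<open>T \<le> s\<close> \<open>0 < H\<close> by (intro rise) (auto simp: add_increasing2)
  then show ?thesis
    using grid[of n] gap by linarith
qed

lemma convergent_if_no_upcrossings:
  fixes f :: "real \<Rightarrow> real"
  assumes bounded: "eventually (\<lambda>t. \<bar>f t\<bar> \<le> C) at_top" and "finite S"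
    and no_upcrossing: "\<And>c1 c2 \<rho>. c1 < c2 \<Longrightarrow> 0 < \<rho> \<Longrightarrow>
      (\<And>x s. c1 \<le> x \<Longrightarrow> x \<le> c2 \<Longrightarrow> s \<in> S \<Longrightarrow> \<rho> \<le> \<bar>x - s\<bar>) \<Longrightarrow>
      \<exists>T. \<forall>s\<ge>T. f s \<le> c1 \<longrightarrow> (\<forall>t\<ge>s. f t < c2)"
  obtains L where "(f \<longlongrightarrow> L) at_top"
proof -
  define m1 where "m1 = Liminf at_top (\<lambda>t. ereal (f t))"
  define m2 where "m2 = Limsup at_top (\<lambda>t. ereal (f t))"
  have "ereal (- C) \<le> m1"
    unfolding m1_def by (rule Liminf_bounded) (use bounded in \<open>auto elim!: eventually_mono\<close>)
  have "m2 \<le> ereal C"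
    unfolding m2_def by (rule Limsup_bounded) (use bounded in \<open>auto elim!: eventually_mono\<close>)
  have "m1 = m2"
  proof (rule ccontr)
    assume "m1 \<noteq> m2"
    then have "m1 < m2"
      using Liminf_le_Limsup[OF trivial_limit_at_top_linorder] unfolding m1_def m2_def
      by (simp add: order_less_le)
    then obtain x1 x2 where x: "m1 < ereal x1" "x1 < x2" "ereal x2 < m2"
      by (metis ereal_dense2 less_ereal.simps(1))
    obtain c1 c2 \<rho> where c: "x1 < c1" "c1 < c2" "c2 < x2" "0 < \<rho>"
      and far: "\<And>x s. c1 \<le> x \<Longrightarrow> x \<le> c2 \<Longrightarrow> s \<in> S \<Longrightarrow> \<rho> \<le> \<bar>x - s\<bar>"
      using subinterval_avoiding_finite_set[OF x(2) \<open>finite S\<close>] by blast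
    obtain T where T: "\<And>s t. T \<le> s \<Longrightarrow> f s \<le> c1 \<Longrightarrow> s \<le> t \<Longrightarrow> f t < c2"
      using no_upcrossing[OF c(2,4) far] by blast
    have "\<exists>s\<ge>T. f s \<le> c1"
    proof (rule ccontr)
      assume "\<not> (\<exists>s\<ge>T. f s \<le> c1)"
      then have "ereal c1 \<le> m1"
        unfolding m1_def by (intro Liminf_bounded eventually_at_top_linorderI[of T]) auto
      then have "ereal c1 < ereal x1"
        using x(1) by (rule le_less_trans)
      then show False
        using c(1) by simp
    qed
    then obtain s where "T \<le> s" "f s \<le> c1"
      by blast
    then have "m2 \<le> ereal c2"
      unfolding m2_def using T by (intro Limsup_bounded eventually_at_top_linorderI[of s]) force
    with x(3) have "ereal x2 < ereal c2"
      by (rule less_le_trans)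
    then show False
      using c(3) by simp
  qed
  then obtain L where L: "m1 = ereal L" "m2 = ereal L"
    using \<open>ereal (- C) \<le> m1\<close> \<open>m2 \<le> ereal C\<close> by (cases m2) auto
  have "((\<lambda>t. ereal (f t)) \<longlongrightarrow> ereal L) at_top"
    by (rule Liminf_eq_Limsup) (use L in \<open>simp_all add: m1_def m2_def\<close>)
  then show thesis
    by (intro that) simp
qed

lemma frequently_less_of_less_Limsup:
  fixes f :: "'a \<Rightarrow> 'b::complete_linorder"
  assumes "y < Limsup F f"
  shows "\<exists>\<^sub>F x in F. y < f x"
proof (rule ccontr)
  assume "\<not> ?thesis"
  then have "eventually (\<lambda>x. f x \<le> y) F"
    by (simp add: not_frequently not_less)
  then have "Limsup F f \<le> y"
    by (rule Limsup_bounded)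
  with assms show False
    by simp
qed

lemma tendsto_zero_mult_powr_bounded:
  fixes h v :: "'a \<Rightarrow> real"
  assumes "(h \<longlongrightarrow> 0) F" and "eventually (\<lambda>x. 0 < v x \<and> v x < M) F" and "0 \<le> p"
  shows "((\<lambda>x. h x * v x powr p) \<longlongrightarrow> 0) F"
proof (rule Lim_null_comparison)
  show "eventually (\<lambda>x. norm (h x * v x powr p) \<le> \<bar>h x\<bar> * M powr p) F"
    using assms(2)
  proof eventually_elim
    case (elim x)
    then have "v x powr p \<le> M powr p"
      using \<open>0 \<le> p\<close> by (intro powr_mono2) auto
    then show ?case
      by (simp add: abs_mult mult_left_mono)
  qed
  show "((\<lambda>x. \<bar>h x\<bar> * M powr p) \<longlongrightarrow> 0) F"
    using assms(1) by (intro tendsto_mult_left_zero tendsto_rabs_zero)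
qed

section \<open>Damped oscillators with a vanishing perturbation\<close>

locale damped_oscillator =
  fixes w w' w'' e :: "real \<Rightarrow> real" and a \<alpha> k p M \<gamma> T0 y0 :: real
  assumes a_pos: "0 < a" and \<alpha>_pos: "0 < \<alpha>" and k_pos: "0 < k" and p_gt_1: "1 < p"
    and \<gamma>_pos: "0 < \<gamma>" and equilibrium: "k * \<gamma> powr (p - 1) = \<alpha>" and \<gamma>_less_M: "\<gamma> < M"
    and y0_pos: "0 < y0" and frequently_above_y0: "\<exists>\<^sub>F t in at_top. y0 < w t"
    and DERIV_w: "\<And>t. T0 \<le> t \<Longrightarrow> (w has_real_derivative w' t) (at t)"
    and DERIV_w': "\<And>t. T0 \<le> t \<Longrightarrow> (w' has_real_derivative w'' t) (at t)"
    and w_pos: "\<And>t. T0 \<le> t \<Longrightarrow> 0 < w t" and w_le_M: "\<And>t. T0 \<le> t \<Longrightarrow> w t \<le> M"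
    and ode: "\<And>t. T0 \<le> t \<Longrightarrow> w'' t = - a * w' t + (\<alpha> * w t - k * w t powr p) + e t"
    and e_tendsto: "(e \<longlongrightarrow> 0) at_top" and abs_e_le_1: "\<And>t. T0 \<le> t \<Longrightarrow> \<bar>e t\<bar> \<le> 1"
begin

definition force :: "real \<Rightarrow> real" where
  "force s = \<alpha> * s - k * s powr p"

definition potential :: "real \<Rightarrow> real" where
  "potential s = k * s powr (p + 1) / (p + 1) - \<alpha> * s\<^sup>2 / 2"

definition energy :: "real \<Rightarrow> real" where
  "energy t = (w' t)\<^sup>2 / 2 + potential (w t)"

definition force_bound :: real where
  "force_bound = \<alpha> * M + k * M powr p"

definition force_lipschitz :: real where
  "force_lipschitz = \<alpha> + k * p * M powr (p - 1)"

definition velocity_bound :: real where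
  "velocity_bound = \<bar>w' T0\<bar> + (force_bound + 1) / a"

definition acceleration_bound :: real where
  "acceleration_bound = a * velocity_bound + force_bound + 1"

lemma M_pos: "0 < M"
  using \<gamma>_pos \<gamma>_less_M by simp

lemma force_bound_pos: "0 < force_bound"
  unfolding force_bound_def using \<alpha>_pos k_pos M_pos by (simp add: add_pos_nonneg)

lemma force_lipschitz_pos: "0 < force_lipschitz"
  unfolding force_lipschitz_def using \<alpha>_pos k_pos p_gt_1 by (simp add: add_pos_nonneg)

lemma velocity_bound_nonneg: "0 \<le> velocity_bound"
  unfolding velocity_bound_def using a_pos force_bound_pos by simp

lemma acceleration_bound_pos: "0 < acceleration_bound"
  unfolding acceleration_bound_def
  using a_pos force_bound_pos mult_nonneg_nonneg[of a velocity_bound] velocity_bound_nonneg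
  by linarith

lemma abs_force_le:
  assumes "0 < s" "s \<le> M"
  shows "\<bar>force s\<bar> \<le> force_bound"
proof -
  have "k * s powr p \<le> k * M powr p"
    using assms p_gt_1 k_pos by (simp add: powr_mono2)
  moreover have "\<alpha> * s \<le> \<alpha> * M"
    using assms \<alpha>_pos by simp
  moreover have "0 \<le> k * s powr p" "0 \<le> \<alpha> * s"
    using assms \<alpha>_pos k_pos by simp_all
  ultimately show ?thesis
    unfolding force_def force_bound_def abs_le_iff by linarith
qed

lemma DERIV_force:
  assumes "0 < s"
  shows "(force has_real_derivative \<alpha> - k * p * s powr (p - 1)) (at s)"
  unfolding force_def[abs_def] using assms by (auto intro!: derivative_eq_intros)

lemma DERIV_potential:
  assumes "0 < s"
  shows "(potential has_real_derivative - force s) (at s)"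
proof -
  have "(potential has_real_derivative
      k * ((p + 1) * s powr (p + 1 - 1)) / (p + 1) - \<alpha> * (2 * s) / 2) (at s)"
    unfolding potential_def[abs_def] using assms by (auto intro!: derivative_eq_intros)
  then show ?thesis
    unfolding force_def using assms p_gt_1 by simp
qed

lemma abs_force_diff_le:
  assumes "0 < x" "x \<le> M" "0 < y" "y \<le> M"
  shows "\<bar>force x - force y\<bar> \<le> force_lipschitz * \<bar>x - y\<bar>"
proof (rule abs_diff_le_of_DERIV_bounded[where S = "{0<..M}"])
  fix s :: real assume s: "s \<in> {0<..M}"
  then show "(force has_real_derivative \<alpha> - k * p * s powr (p - 1)) (at s)"
    by (simp add: DERIV_force)
  have "k * p * s powr (p - 1) \<le> k * p * M powr (p - 1)"
    using s p_gt_1 k_pos by (simp add: powr_mono2)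
  moreover have "0 \<le> k * p * s powr (p - 1)"
    using k_pos p_gt_1 by simp
  ultimately show "\<bar>\<alpha> - k * p * s powr (p - 1)\<bar> \<le> force_lipschitz"
    unfolding force_lipschitz_def abs_le_iff using \<alpha>_pos by linarith
qed (use assms in auto)

lemma abs_potential_diff_le:
  assumes "0 < x" "x \<le> M" "0 < y" "y \<le> M"
  shows "\<bar>potential x - potential y\<bar> \<le> force_bound * \<bar>x - y\<bar>"
proof (rule abs_diff_le_of_DERIV_bounded[where S = "{0<..M}"])
  fix s :: real assume s: "s \<in> {0<..M}"
  then show "(potential has_real_derivative - force s) (at s)"
    by (simp add: DERIV_potential)
  show "\<bar>- force s\<bar> \<le> force_bound"
    using s abs_force_le by simp
qed (use assms in auto)

lemma abs_potential_le:
  assumes "0 < s" "s \<le> 1"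
  shows "\<bar>potential s\<bar> \<le> (\<alpha> + k) * s"
proof -
  have "s powr (p + 1) = s powr p * s"
    using assms by (simp add: powr_add)
  moreover have "s powr p \<le> 1"
    using assms p_gt_1 by (intro powr_le1) auto
  ultimately have "s powr (p + 1) \<le> s"
    using assms by (simp add: mult_left_le_one_le)
  then have "k * s powr (p + 1) / (p + 1) \<le> k * s"
    using assms k_pos p_gt_1 by (simp add: divide_le_eq mult_left_mono mult_le_cancel_left1 order.trans)
  moreover have "\<alpha> * s\<^sup>2 / 2 \<le> \<alpha> * s"
    using assms \<alpha>_pos by (simp add: power2_eq_square mult_left_le_one_le)
  moreover have "0 \<le> k * s powr (p + 1) / (p + 1)" "0 \<le> \<alpha> * s\<^sup>2 / 2"
    using k_pos p_gt_1 \<alpha>_pos by simp_all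
  ultimately show ?thesis
    unfolding potential_def abs_le_iff distrib_right by linarith
qed

lemma ode_force: "T0 \<le> t \<Longrightarrow> w'' t + a * w' t = force (w t) + e t"
  using ode unfolding force_def by simp

lemma abs_force_plus_e_le: "T0 \<le> t \<Longrightarrow> \<bar>force (w t) + e t\<bar> \<le> force_bound + 1"
  using abs_force_le[OF w_pos w_le_M] abs_e_le_1 abs_triangle_ineq[of "force (w t)" "e t"]
  by fastforce

lemma abs_velocity_le: "T0 \<le> t \<Longrightarrow> \<bar>w' t\<bar> \<le> velocity_bound"
  unfolding velocity_bound_def
  by (rule abs_le_of_damped_DERIV[OF a_pos _ DERIV_w']) (use ode_force abs_force_plus_e_le in auto)

lemma abs_acceleration_le: "T0 \<le> t \<Longrightarrow> \<bar>w'' t\<bar> \<le> acceleration_bound"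
proof -
  assume "T0 \<le> t"
  then have "\<bar>a * w' t\<bar> \<le> a * velocity_bound"
    using abs_velocity_le a_pos by (simp add: abs_mult)
  then show ?thesis
    using ode_force[OF \<open>T0 \<le> t\<close>] abs_force_plus_e_le[OF \<open>T0 \<le> t\<close>]
    unfolding acceleration_bound_def by (simp add: abs_le_iff)
qed

lemma abs_velocity_diff_le:
  "T0 \<le> x \<Longrightarrow> T0 \<le> y \<Longrightarrow> \<bar>w' x - w' y\<bar> \<le> acceleration_bound * \<bar>x - y\<bar>"
  by (rule abs_diff_le_of_DERIV_bounded[where S = "{T0..}"])
    (auto intro: DERIV_w' abs_acceleration_le)

lemma DERIV_energy:
  assumes "T0 \<le> t"
  shows "(energy has_real_derivative - a * (w' t)\<^sup>2 + e t * w' t) (at t)"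
proof -
  have w'': "w'' t = force (w t) + e t - a * w' t"
    using ode_force[OF assms] by simp
  have "(energy has_real_derivative w' t * w'' t + - force (w t) * w' t) (at t)"
    unfolding energy_def[abs_def]
    by (auto intro!: derivative_eq_intros DERIV_chain2[OF DERIV_potential] DERIV_w DERIV_w'
        w_pos assms simp: power2_eq_square)
  moreover have "w' t * w'' t + - force (w t) * w' t = - a * (w' t)\<^sup>2 + e t * w' t"
    unfolding w'' by (simp add: algebra_simps power2_eq_square)
  ultimately show ?thesis
    by simp
qed

lemma energy_increase_le:
  assumes "T0 \<le> x" "x \<le> y" and small: "\<And>t. x \<le> t \<Longrightarrow> t \<le> y \<Longrightarrow> \<bar>e t\<bar> \<le> \<epsilon>"
  shows "energy y - energy x \<le> \<epsilon>\<^sup>2 / (4 * a) * (y - x)"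
  by (rule diff_le_of_DERIV_le[OF \<open>x \<le> y\<close> DERIV_energy])
    (use assms a_pos dissipation_rate_le in auto)

lemma energy_loss_if_fast:
  assumes "0 < \<eta>"
  obtains r D where "0 < r" "0 < D"
    "\<And>s. T0 \<le> s \<Longrightarrow> \<eta> \<le> \<bar>w' s\<bar> \<Longrightarrow> (\<And>u. s \<le> u \<Longrightarrow> u \<le> s + r \<Longrightarrow> \<bar>e u\<bar> \<le> a * \<eta> / 4) \<Longrightarrow>
      energy (s + r) \<le> energy s - D"
proof
  define r where "r = \<eta> / (2 * acceleration_bound)"
  show "0 < r" "0 < a * \<eta>\<^sup>2 / 8 * r"
    unfolding r_def using assms a_pos acceleration_bound_pos by simp_all
  fix s assume s: "T0 \<le> s" "\<eta> \<le> \<bar>w' s\<bar>"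
    and small: "\<And>u. s \<le> u \<Longrightarrow> u \<le> s + r \<Longrightarrow> \<bar>e u\<bar> \<le> a * \<eta> / 4"
  have fast: "\<eta> / 2 \<le> \<bar>w' u\<bar>" if "s \<le> u" "u \<le> s + r" for u
  proof -
    have "\<bar>w' u - w' s\<bar> \<le> acceleration_bound * \<bar>u - s\<bar>"
      using s that by (intro abs_velocity_diff_le) auto
    also have "\<dots> \<le> acceleration_bound * r"
      using that acceleration_bound_pos by (intro mult_left_mono) auto
    also have "\<dots> = \<eta> / 2"
      unfolding r_def using acceleration_bound_pos by simp
    finally show ?thesis
      using s(2) by linarith
  qed
  have "energy (s + r) - energy s \<le> - (a * \<eta>\<^sup>2 / 8) * (s + r - s)"
    by (rule diff_le_of_DERIV_le[OF _ DERIV_energy])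
      (use s small fast a_pos \<open>0 < \<eta>\<close> \<open>0 < r\<close> dissipation_rate_le_neg in auto)
  then show "energy (s + r) \<le> energy s - a * \<eta>\<^sup>2 / 8 * r"
    by simp
qed

lemma abs_force_le_if_slow:
  assumes "T0 \<le> t" "0 \<le> \<eta>"
    and slow: "\<And>s. t \<le> s \<Longrightarrow> s \<le> t + 1 \<Longrightarrow> \<bar>w' s\<bar> \<le> \<eta> \<and> \<bar>e s\<bar> \<le> \<epsilon>"
  shows "\<bar>force (w t)\<bar> \<le> \<eta> * (2 + a + force_lipschitz) + \<epsilon>"
proof -
  obtain z where z: "t < z" "z < t + 1" "w' (t + 1) - w' t = (t + 1 - t) * w'' z"
    using MVT2[of t "t + 1" w' w''] DERIV_w' \<open>T0 \<le> t\<close> by auto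
  have "T0 \<le> z"
    using z \<open>T0 \<le> t\<close> by simp
  have "\<bar>w'' z\<bar> \<le> 2 * \<eta>"
    using z(3) slow[of t] slow[of "t + 1"] by (auto simp: abs_le_iff)
  moreover have "\<bar>a * w' z\<bar> \<le> a * \<eta>"
    using slow[of z] z a_pos by (simp add: abs_mult)
  moreover have "\<bar>e z\<bar> \<le> \<epsilon>"
    using slow[of z] z by simp
  ultimately have "\<bar>force (w z)\<bar> \<le> 2 * \<eta> + a * \<eta> + \<epsilon>"
    using ode_force[OF \<open>T0 \<le> z\<close>] by (simp add: abs_le_iff)
  have "\<bar>w t - w z\<bar> \<le> \<eta> * \<bar>t - z\<bar>"
    by (rule abs_diff_le_of_DERIV_bounded[where S = "{t..z}"])
      (use z \<open>T0 \<le> t\<close> slow in \<open>auto intro: DERIV_w\<close>)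
  also have "\<dots> \<le> \<eta>"
    using z \<open>0 \<le> \<eta>\<close> by (simp add: mult_left_le)
  finally have "\<bar>w t - w z\<bar> \<le> \<eta>" .
  have "\<bar>force (w t) - force (w z)\<bar> \<le> force_lipschitz * \<bar>w t - w z\<bar>"
    using \<open>T0 \<le> t\<close> \<open>T0 \<le> z\<close> by (intro abs_force_diff_le w_pos w_le_M)
  also have "\<dots> \<le> force_lipschitz * \<eta>"
    using \<open>\<bar>w t - w z\<bar> \<le> \<eta>\<close> force_lipschitz_pos by (intro mult_left_mono) auto
  finally have "\<bar>force (w t) - force (w z)\<bar> \<le> force_lipschitz * \<eta>" .
  with \<open>\<bar>force (w z)\<bar> \<le> 2 * \<eta> + a * \<eta> + \<epsilon>\<close> show ?thesis
    by (simp add: algebra_simps abs_le_iff)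
qed

definition force_gap :: "real \<Rightarrow> real" where
  "force_gap \<rho> = \<rho> * k *
    min ((\<gamma> + \<rho>) powr (p - 1) - \<gamma> powr (p - 1)) (\<gamma> powr (p - 1) - (\<gamma> - \<rho>) powr (p - 1))"

lemma force_gap_pos: "0 < \<rho> \<Longrightarrow> \<rho> \<le> \<gamma> / 2 \<Longrightarrow> 0 < force_gap \<rho>"
  unfolding force_gap_def using \<gamma>_pos p_gt_1 k_pos by (simp add: powr_less_mono2)

lemma force_eq:
  assumes "0 < s"
  shows "force s = s * k * (\<gamma> powr (p - 1) - s powr (p - 1))"
proof -
  have "force s = k * \<gamma> powr (p - 1) * s - k * (s * s powr (p - 1))"
    unfolding force_def equilibrium using powr_add[of s 1 "p - 1"] assms by simp
  then show ?thesis
    by (simp add: algebra_simps)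
qed

lemma force_gap_le_abs_force:
  assumes "0 < \<rho>" "\<rho> \<le> \<gamma> / 2" and "\<rho> \<le> s" "\<rho> \<le> \<bar>s - \<gamma>\<bar>"
  shows "force_gap \<rho> \<le> \<bar>force s\<bar>"
proof -
  define m where "m = min ((\<gamma> + \<rho>) powr (p - 1) - \<gamma> powr (p - 1)) (\<gamma> powr (p - 1) - (\<gamma> - \<rho>) powr (p - 1))"
  have "\<gamma> powr (p - 1) \<le> (\<gamma> + \<rho>) powr (p - 1)" "(\<gamma> - \<rho>) powr (p - 1) \<le> \<gamma> powr (p - 1)"
    using assms \<gamma>_pos p_gt_1 by (auto intro: powr_mono2)
  then have "0 \<le> m"
    unfolding m_def by simp
  have "m \<le> \<bar>\<gamma> powr (p - 1) - s powr (p - 1)\<bar>"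
  proof (cases "\<gamma> \<le> s")
    case True
    then have "(\<gamma> + \<rho>) powr (p - 1) \<le> s powr (p - 1)"
      using assms \<gamma>_pos p_gt_1 by (intro powr_mono2) auto
    then show ?thesis
      unfolding m_def by simp
  next
    case False
    then have "s powr (p - 1) \<le> (\<gamma> - \<rho>) powr (p - 1)"
      using assms p_gt_1 by (intro powr_mono2) auto
    then show ?thesis
      unfolding m_def by simp
  qed
  then have "\<rho> * k * m \<le> s * k * \<bar>\<gamma> powr (p - 1) - s powr (p - 1)\<bar>"
    using assms k_pos \<open>0 \<le> m\<close> by (intro mult_mono) auto
  then show ?thesis
    unfolding force_gap_def m_def[symmetric] force_eq[OF order.strict_trans2[OF assms(1,3)]]
    using assms k_pos by (simp add: abs_mult)
qed

lemma near_equilibrium_if_slow: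
  assumes "0 < \<rho>" "\<rho> \<le> \<gamma> / 2"
  obtains \<eta> \<epsilon> where "0 < \<eta>" "0 < \<epsilon>"
    "\<And>t. T0 \<le> t \<Longrightarrow> (\<And>s. t \<le> s \<Longrightarrow> s \<le> t + 1 \<Longrightarrow> \<bar>w' s\<bar> \<le> \<eta> \<and> \<bar>e s\<bar> \<le> \<epsilon>) \<Longrightarrow>
      w t < \<rho> \<or> \<bar>w t - \<gamma>\<bar> < \<rho>"
proof
  define \<eta> where "\<eta> = force_gap \<rho> / (4 * (2 + a + force_lipschitz))"
  have "0 < 2 + a + force_lipschitz"
    using a_pos force_lipschitz_pos by simp
  then show "0 < \<eta>" "0 < force_gap \<rho> / 2"
    unfolding \<eta>_def using force_gap_pos[OF assms] by simp_all
  fix t assume "T0 \<le> t"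
    and slow: "\<And>s. t \<le> s \<Longrightarrow> s \<le> t + 1 \<Longrightarrow> \<bar>w' s\<bar> \<le> \<eta> \<and> \<bar>e s\<bar> \<le> force_gap \<rho> / 2"
  have "\<bar>force (w t)\<bar> \<le> \<eta> * (2 + a + force_lipschitz) + force_gap \<rho> / 2"
    using abs_force_le_if_slow[OF \<open>T0 \<le> t\<close> _ slow] \<open>0 < \<eta>\<close> by simp
  also have "\<dots> = 3 / 4 * force_gap \<rho>"
    unfolding \<eta>_def using \<open>0 < 2 + a + force_lipschitz\<close> by (simp add: field_simps)
  also have "\<dots> < force_gap \<rho>"
    using force_gap_pos[OF assms] by simp
  finally show "w t < \<rho> \<or> \<bar>w t - \<gamma>\<bar> < \<rho>"
    using force_gap_le_abs_force[OF assms, of "w t"] by linarith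
qed

lemma abs_energy_le_near_zero:
  assumes "T0 \<le> t" "w t \<le> 1"
  shows "\<bar>energy t\<bar> \<le> (w' t)\<^sup>2 / 2 + (\<alpha> + k) * w t"
  using abs_potential_le[OF w_pos[OF assms(1)] assms(2)] zero_le_power2[of "w' t"]
  unfolding energy_def abs_le_iff by linarith

lemma abs_energy_diff_le_near_equilibrium:
  assumes "T0 \<le> t"
  shows "\<bar>energy t - potential \<gamma>\<bar> \<le> (w' t)\<^sup>2 / 2 + force_bound * \<bar>w t - \<gamma>\<bar>"
proof -
  have "\<bar>potential (w t) - potential \<gamma>\<bar> \<le> force_bound * \<bar>w t - \<gamma>\<bar>"
    using \<gamma>_pos \<gamma>_less_M by (intro abs_potential_diff_le w_pos w_le_M assms) auto
  then show ?thesis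
    using zero_le_power2[of "w' t"] unfolding energy_def abs_le_iff by linarith
qed

lemma energy_near_critical_values_if_slow:
  assumes "0 < \<rho>0"
  obtains \<eta> \<epsilon> where "0 < \<eta>" "0 < \<epsilon>"
    "\<And>t. T0 \<le> t \<Longrightarrow> (\<And>s. t \<le> s \<Longrightarrow> s \<le> t + 1 \<Longrightarrow> \<bar>w' s\<bar> \<le> \<eta> \<and> \<bar>e s\<bar> \<le> \<epsilon>) \<Longrightarrow>
      \<bar>energy t\<bar> < \<rho>0 \<or> \<bar>energy t - potential \<gamma>\<bar> < \<rho>0"
proof -
  define C where "C = \<alpha> + k + force_bound"
  have "0 < C"
    unfolding C_def using \<alpha>_pos k_pos force_bound_pos by simp
  define \<rho> where "\<rho> = min (\<gamma> / 2) (min 1 (\<rho>0 / (2 * C)))"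
  have \<rho>: "0 < \<rho>" "\<rho> \<le> \<gamma> / 2" "\<rho> \<le> 1" "\<rho> \<le> \<rho>0 / (2 * C)"
    unfolding \<rho>_def using \<gamma>_pos \<open>0 < \<rho>0\<close> \<open>0 < C\<close> by auto
  then have "C * \<rho> \<le> \<rho>0 / 2"
    using \<open>0 < C\<close> by (simp add: pos_le_divide_eq mult_ac)
  obtain \<eta>1 \<epsilon> where "0 < \<eta>1" "0 < \<epsilon>" and near:
    "\<And>t. T0 \<le> t \<Longrightarrow> (\<And>s. t \<le> s \<Longrightarrow> s \<le> t + 1 \<Longrightarrow> \<bar>w' s\<bar> \<le> \<eta>1 \<and> \<bar>e s\<bar> \<le> \<epsilon>) \<Longrightarrow>
      w t < \<rho> \<or> \<bar>w t - \<gamma>\<bar> < \<rho>"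
    using near_equilibrium_if_slow[OF \<rho>(1,2)] by blast
  define \<eta> where "\<eta> = min \<eta>1 (min 1 (\<rho>0 / 2))"
  show thesis
  proof (rule that[of \<eta> \<epsilon>])
    show "0 < \<eta>" "0 < \<epsilon>"
      unfolding \<eta>_def using \<open>0 < \<eta>1\<close> \<open>0 < \<epsilon>\<close> \<open>0 < \<rho>0\<close> by auto
    have "\<eta> \<le> 1"
      unfolding \<eta>_def by simp
    fix t assume "T0 \<le> t"
      and slow: "\<And>s. t \<le> s \<Longrightarrow> s \<le> t + 1 \<Longrightarrow> \<bar>w' s\<bar> \<le> \<eta> \<and> \<bar>e s\<bar> \<le> \<epsilon>"
    have "\<bar>w' t\<bar>\<^sup>2 \<le> \<eta>\<^sup>2"
      using slow[of t] by (intro power_mono) auto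
    also have "\<dots> \<le> \<eta>"
      using \<open>0 < \<eta>\<close> \<open>\<eta> \<le> 1\<close> by (simp add: power2_eq_square mult_left_le_one_le)
    also have "\<dots> \<le> \<rho>0 / 2"
      unfolding \<eta>_def by simp
    finally have kinetic: "(w' t)\<^sup>2 / 2 < \<rho>0 / 2"
      using \<open>0 < \<rho>0\<close> by simp
    have "w t < \<rho> \<or> \<bar>w t - \<gamma>\<bar> < \<rho>"
      using near[OF \<open>T0 \<le> t\<close>] slow unfolding \<eta>_def by fastforce
    then show "\<bar>energy t\<bar> < \<rho>0 \<or> \<bar>energy t - potential \<gamma>\<bar> < \<rho>0"
    proof
      assume "w t < \<rho>"
      have "(\<alpha> + k) * w t \<le> C * \<rho>"
        unfolding C_def using \<open>w t < \<rho>\<close> w_pos[OF \<open>T0 \<le> t\<close>] \<alpha>_pos k_pos force_bound_pos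
        by (intro mult_mono) auto
      then have "\<bar>energy t\<bar> < \<rho>0"
        using abs_energy_le_near_zero[OF \<open>T0 \<le> t\<close>] \<open>w t < \<rho>\<close> \<rho>(3) kinetic \<open>C * \<rho> \<le> \<rho>0 / 2\<close>
        by fastforce
      then show ?thesis ..
    next
      assume "\<bar>w t - \<gamma>\<bar> < \<rho>"
      have "force_bound * \<bar>w t - \<gamma>\<bar> \<le> C * \<rho>"
        unfolding C_def using \<open>\<bar>w t - \<gamma>\<bar> < \<rho>\<close> \<alpha>_pos k_pos force_bound_pos
        by (intro mult_mono) auto
      then have "\<bar>energy t - potential \<gamma>\<bar> < \<rho>0"
        using abs_energy_diff_le_near_equilibrium[OF \<open>T0 \<le> t\<close>] kinetic \<open>C * \<rho> \<le> \<rho>0 / 2\<close>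
        by linarith
      then show ?thesis ..
    qed
  qed
qed

lemma eventually_abs_e_le: "0 < \<epsilon> \<Longrightarrow> \<exists>T. \<forall>t\<ge>T. \<bar>e t\<bar> \<le> \<epsilon>"
  using tendstoD[OF e_tendsto] unfolding eventually_at_top_linorder dist_real_def
  by (metis diff_zero less_imp_le)

lemma energy_decrease_away_from_critical_values:
  assumes "0 < \<rho>0"
  obtains r D \<epsilon>0 where "0 < r" "0 < D" "0 < \<epsilon>0"
    "\<And>t \<epsilon>. T0 \<le> t \<Longrightarrow> \<epsilon> \<le> \<epsilon>0 \<Longrightarrow> (\<And>s. t \<le> s \<Longrightarrow> \<bar>e s\<bar> \<le> \<epsilon>) \<Longrightarrow>
      \<rho>0 \<le> \<bar>energy t\<bar> \<Longrightarrow> \<rho>0 \<le> \<bar>energy t - potential \<gamma>\<bar> \<Longrightarrow>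
      energy (t + 1 + r) \<le> energy t - D + \<epsilon>\<^sup>2 / (4 * a)"
proof -
  obtain \<eta> \<epsilon>1 where "0 < \<eta>" "0 < \<epsilon>1" and near:
    "\<And>t. T0 \<le> t \<Longrightarrow> (\<And>s. t \<le> s \<Longrightarrow> s \<le> t + 1 \<Longrightarrow> \<bar>w' s\<bar> \<le> \<eta> \<and> \<bar>e s\<bar> \<le> \<epsilon>1) \<Longrightarrow>
      \<bar>energy t\<bar> < \<rho>0 \<or> \<bar>energy t - potential \<gamma>\<bar> < \<rho>0"
    using energy_near_critical_values_if_slow[OF \<open>0 < \<rho>0\<close>] by blast
  obtain r D where "0 < r" "0 < D" and loss:
    "\<And>s. T0 \<le> s \<Longrightarrow> \<eta> \<le> \<bar>w' s\<bar> \<Longrightarrow> (\<And>u. s \<le> u \<Longrightarrow> u \<le> s + r \<Longrightarrow> \<bar>e u\<bar> \<le> a * \<eta> / 4) \<Longrightarrow>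
      energy (s + r) \<le> energy s - D"
    using energy_loss_if_fast[OF \<open>0 < \<eta>\<close>] by blast
  show thesis
  proof (rule that[of r D "min \<epsilon>1 (a * \<eta> / 4)"])
    show "0 < r" "0 < D" "0 < min \<epsilon>1 (a * \<eta> / 4)"
      using \<open>0 < r\<close> \<open>0 < D\<close> \<open>0 < \<epsilon>1\<close> \<open>0 < \<eta>\<close> a_pos by auto
    fix t \<epsilon> assume "T0 \<le> t" "\<epsilon> \<le> min \<epsilon>1 (a * \<eta> / 4)"
      and small: "\<And>s. t \<le> s \<Longrightarrow> \<bar>e s\<bar> \<le> \<epsilon>"
      and far: "\<rho>0 \<le> \<bar>energy t\<bar>" "\<rho>0 \<le> \<bar>energy t - potential \<gamma>\<bar>"
    have "\<exists>s. t \<le> s \<and> s \<le> t + 1 \<and> \<eta> < \<bar>w' s\<bar>"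
    proof (rule ccontr)
      assume slow: "\<nexists>s. t \<le> s \<and> s \<le> t + 1 \<and> \<eta> < \<bar>w' s\<bar>"
      have "\<bar>w' s\<bar> \<le> \<eta> \<and> \<bar>e s\<bar> \<le> \<epsilon>1" if "t \<le> s" "s \<le> t + 1" for s
        using slow that small[of s] \<open>\<epsilon> \<le> min \<epsilon>1 (a * \<eta> / 4)\<close> by force
      then show False
        using near[OF \<open>T0 \<le> t\<close>] far by fastforce
    qed
    then obtain s where s: "t \<le> s" "s \<le> t + 1" "\<eta> < \<bar>w' s\<bar>"
      by blast
    have "\<bar>e u\<bar> \<le> a * \<eta> / 4" if "s \<le> u" for u
      using small[of u] s(1) that \<open>\<epsilon> \<le> min \<epsilon>1 (a * \<eta> / 4)\<close> by simp
    then have "energy (s + r) \<le> energy s - D"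
      using s \<open>T0 \<le> t\<close> by (intro loss) auto
    moreover have "energy s - energy t \<le> \<epsilon>\<^sup>2 / (4 * a) * (s - t)"
      using s \<open>T0 \<le> t\<close> small by (intro energy_increase_le) auto
    moreover have "energy (t + 1 + r) - energy (s + r) \<le> \<epsilon>\<^sup>2 / (4 * a) * (t + 1 + r - (s + r))"
      using s \<open>T0 \<le> t\<close> \<open>0 < r\<close> by (intro energy_increase_le) (auto intro!: small)
    moreover have "\<epsilon>\<^sup>2 / (4 * a) * (s - t) + \<epsilon>\<^sup>2 / (4 * a) * (t + 1 + r - (s + r)) = \<epsilon>\<^sup>2 / (4 * a)"
      by (subst distrib_left[symmetric]) simp
    ultimately show "energy (t + 1 + r) \<le> energy t - D + \<epsilon>\<^sup>2 / (4 * a)"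
      by linarith
  qed
qed

lemma energy_no_upcrossing:
  assumes "c1 < c2" "0 < \<rho>0"
    and far: "\<And>x s. c1 \<le> x \<Longrightarrow> x \<le> c2 \<Longrightarrow> s \<in> {0, potential \<gamma>} \<Longrightarrow> \<rho>0 \<le> \<bar>x - s\<bar>"
  shows "\<exists>T. \<forall>s\<ge>T. energy s \<le> c1 \<longrightarrow> (\<forall>t\<ge>s. energy t < c2)"
proof -
  obtain r D \<epsilon>0 where "0 < r" "0 < D" "0 < \<epsilon>0" and decrease:
    "\<And>t \<epsilon>. T0 \<le> t \<Longrightarrow> \<epsilon> \<le> \<epsilon>0 \<Longrightarrow> (\<And>s. t \<le> s \<Longrightarrow> \<bar>e s\<bar> \<le> \<epsilon>) \<Longrightarrow>
      \<rho>0 \<le> \<bar>energy t\<bar> \<Longrightarrow> \<rho>0 \<le> \<bar>energy t - potential \<gamma>\<bar> \<Longrightarrow>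
      energy (t + 1 + r) \<le> energy t - D + \<epsilon>\<^sup>2 / (4 * a)"
    using energy_decrease_away_from_critical_values[OF \<open>0 < \<rho>0\<close>] by blast
  define H where "H = 1 + r"
  define q where "q = min D ((c2 - c1) / (4 * H))"
  define \<epsilon> where "\<epsilon> = min \<epsilon>0 (min 1 (4 * a * q))"
  have "0 < H" "0 < q" "q \<le> D" "q \<le> (c2 - c1) / (4 * H)"
    using \<open>0 < r\<close> \<open>0 < D\<close> \<open>c1 < c2\<close> unfolding H_def q_def by auto
  then have "c1 + 2 * (q * H) < c2"
    using \<open>c1 < c2\<close> by (simp add: le_divide_eq mult_ac)
  have "0 < \<epsilon>" "\<epsilon> \<le> \<epsilon>0" "\<epsilon> \<le> 1" "\<epsilon> \<le> 4 * a * q"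
    unfolding \<epsilon>_def using \<open>0 < \<epsilon>0\<close> \<open>0 < q\<close> a_pos by auto
  then have "\<epsilon>\<^sup>2 \<le> 4 * a * q"
    using mult_left_le_one_le[of \<epsilon> \<epsilon>] unfolding power2_eq_square by linarith
  then have "\<epsilon>\<^sup>2 / (4 * a) \<le> q"
    using a_pos by (simp add: divide_le_eq mult.commute)
  obtain T1 where T1: "\<And>t. T1 \<le> t \<Longrightarrow> \<bar>e t\<bar> \<le> \<epsilon>"
    using eventually_abs_e_le[OF \<open>0 < \<epsilon>\<close>] by blast
  define T where "T = max T0 T1"
  have rise: "energy y \<le> energy x + q * H" if "T \<le> x" "x \<le> y" "y \<le> x + H" for x y
  proof -
    have "energy y - energy x \<le> \<epsilon>\<^sup>2 / (4 * a) * (y - x)"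
      using that T1 unfolding T_def by (intro energy_increase_le) auto
    also have "\<dots> \<le> q * H"
      using \<open>\<epsilon>\<^sup>2 / (4 * a) \<le> q\<close> \<open>0 < q\<close> that by (intro mult_mono) auto
    finally show ?thesis
      by simp
  qed
  have drop: "energy (t + H) \<le> energy t" if "T \<le> t" "c1 \<le> energy t" "energy t \<le> c2" for t
    using decrease[of t \<epsilon>] far[OF that(2,3)] that(1) T1 \<open>\<epsilon> \<le> \<epsilon>0\<close> \<open>\<epsilon>\<^sup>2 / (4 * a) \<le> q\<close> \<open>q \<le> D\<close>
    unfolding T_def H_def by (force simp: add.assoc)
  show ?thesis
    using no_upcrossing_of_bounded_rise_and_drop[where f = energy,
        OF \<open>0 < H\<close> \<open>c1 + 2 * (q * H) < c2\<close> rise drop]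
    by blast
qed

lemma energy_convergent:
  obtains L where "(energy \<longlongrightarrow> L) at_top"
proof (rule convergent_if_no_upcrossings[where S = "{0, potential \<gamma>}"])
  show "eventually (\<lambda>t. \<bar>energy t\<bar> \<le> velocity_bound\<^sup>2 / 2 + \<bar>potential \<gamma>\<bar> + force_bound * M) at_top"
  proof (rule eventually_at_top_linorderI[of T0])
    fix t assume "T0 \<le> t"
    have "\<bar>potential (w t) - potential \<gamma>\<bar> \<le> force_bound * \<bar>w t - \<gamma>\<bar>"
      using \<gamma>_pos \<gamma>_less_M by (intro abs_potential_diff_le w_pos w_le_M \<open>T0 \<le> t\<close>) auto
    also have "\<dots> \<le> force_bound * M"
      using w_pos[OF \<open>T0 \<le> t\<close>] w_le_M[OF \<open>T0 \<le> t\<close>] \<gamma>_pos \<gamma>_less_M force_bound_pos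
      by (intro mult_left_mono) auto
    finally have "\<bar>potential (w t)\<bar> \<le> \<bar>potential \<gamma>\<bar> + force_bound * M"
      by simp
    moreover have "(w' t)\<^sup>2 \<le> velocity_bound\<^sup>2"
      using abs_velocity_le[OF \<open>T0 \<le> t\<close>] power_mono[of "\<bar>w' t\<bar>" velocity_bound 2] by simp
    ultimately show "\<bar>energy t\<bar> \<le> velocity_bound\<^sup>2 / 2 + \<bar>potential \<gamma>\<bar> + force_bound * M"
      using zero_le_power2[of "w' t"] unfolding energy_def abs_le_iff by linarith
  qed
qed (use energy_no_upcrossing that in auto)

lemma velocity_tendsto_zero: "(w' \<longlongrightarrow> 0) at_top"
proof (rule tendstoI)
  fix \<eta> :: real assume "0 < \<eta>"
  obtain L where L: "(energy \<longlongrightarrow> L) at_top"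
    using energy_convergent by blast
  obtain r D where "0 < r" "0 < D" and loss:
    "\<And>s. T0 \<le> s \<Longrightarrow> \<eta> \<le> \<bar>w' s\<bar> \<Longrightarrow> (\<And>u. s \<le> u \<Longrightarrow> u \<le> s + r \<Longrightarrow> \<bar>e u\<bar> \<le> a * \<eta> / 4) \<Longrightarrow>
      energy (s + r) \<le> energy s - D"
    using energy_loss_if_fast[OF \<open>0 < \<eta>\<close>] by blast
  obtain T1 where T1: "\<And>t. T1 \<le> t \<Longrightarrow> \<bar>e t\<bar> \<le> a * \<eta> / 4"
    using eventually_abs_e_le[of "a * \<eta> / 4"] a_pos \<open>0 < \<eta>\<close> by auto
  obtain T2 where T2: "\<And>t. T2 \<le> t \<Longrightarrow> dist (energy t) L < D / 2"
    using tendstoD[OF L, of "D / 2"] \<open>0 < D\<close> unfolding eventually_at_top_linorder by auto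
  show "eventually (\<lambda>t. dist (w' t) 0 < \<eta>) at_top"
  proof (rule eventually_at_top_linorderI[of "max T0 (max T1 T2)"])
    fix t assume t: "max T0 (max T1 T2) \<le> t"
    show "dist (w' t) 0 < \<eta>"
    proof (rule ccontr)
      assume "\<not> dist (w' t) 0 < \<eta>"
      then have "energy (t + r) \<le> energy t - D"
        using t T1 by (intro loss) auto
      moreover have "dist (energy t) L < D / 2" "dist (energy (t + r)) L < D / 2"
        using t \<open>0 < r\<close> T2[of t] T2[of "t + r"] by auto
      ultimately show False
        unfolding dist_real_def by linarith
    qed
  qed
qed

lemma eventually_near_equilibrium:
  assumes "0 < \<rho>" "\<rho> \<le> \<gamma> / 2"
  shows "eventually (\<lambda>t. w t < \<rho> \<or> \<bar>w t - \<gamma>\<bar> < \<rho>) at_top"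
proof -
  obtain \<eta> \<epsilon> where "0 < \<eta>" "0 < \<epsilon>" and near:
    "\<And>t. T0 \<le> t \<Longrightarrow> (\<And>s. t \<le> s \<Longrightarrow> s \<le> t + 1 \<Longrightarrow> \<bar>w' s\<bar> \<le> \<eta> \<and> \<bar>e s\<bar> \<le> \<epsilon>) \<Longrightarrow>
      w t < \<rho> \<or> \<bar>w t - \<gamma>\<bar> < \<rho>"
    using near_equilibrium_if_slow[OF assms] by blast
  have "eventually (\<lambda>s. T0 \<le> s \<and> dist (w' s) 0 < \<eta> \<and> dist (e s) 0 < \<epsilon>) at_top"
    using tendstoD[OF velocity_tendsto_zero \<open>0 < \<eta>\<close>] tendstoD[OF e_tendsto \<open>0 < \<epsilon>\<close>]
    by (intro eventually_conj eventually_ge_at_top)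
  then obtain T where T: "\<And>s. T \<le> s \<Longrightarrow> T0 \<le> s \<and> \<bar>w' s\<bar> < \<eta> \<and> \<bar>e s\<bar> < \<epsilon>"
    unfolding eventually_at_top_linorder dist_real_def by auto
  show ?thesis
  proof (rule eventually_at_top_linorderI[of T])
    fix t assume "T \<le> t"
    then show "w t < \<rho> \<or> \<bar>w t - \<gamma>\<bar> < \<rho>"
      using T by (intro near) (auto simp: less_imp_le)
  qed
qed

lemma w_tendsto_equilibrium: "(w \<longlongrightarrow> \<gamma>) at_top"
proof (rule tendstoI)
  fix \<epsilon> :: real assume "0 < \<epsilon>"
  define \<rho> where "\<rho> = min (\<gamma> / 2) (min (y0 / 2) \<epsilon>)"
  have \<rho>: "0 < \<rho>" "\<rho> \<le> \<gamma> / 2" "\<rho> < y0" "\<rho> \<le> \<epsilon>"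
    unfolding \<rho>_def using \<gamma>_pos y0_pos \<open>0 < \<epsilon>\<close> by auto
  obtain T where near: "\<And>t. T \<le> t \<Longrightarrow> T0 \<le> t \<and> (w t < \<rho> \<or> \<bar>w t - \<gamma>\<bar> < \<rho>)"
    using eventually_conj[OF eventually_ge_at_top eventually_near_equilibrium[OF \<rho>(1,2)]]
    unfolding eventually_at_top_linorder by blast
  obtain t0 where "T \<le> t0" "y0 < w t0"
    using frequently_above_y0 unfolding frequently_def eventually_at_top_linorder by auto
  then have "\<bar>w t0 - \<gamma>\<bar> < \<rho>"
    using near[of t0] \<rho>(3) by auto
  have "\<bar>w t - \<gamma>\<bar> < \<rho>" if "t0 \<le> t" for t
  proof (rule ccontr)
    assume "\<not> \<bar>w t - \<gamma>\<bar> < \<rho>"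
    then have "w t < \<rho>"
      using near[of t] \<open>T \<le> t0\<close> that by auto
    \<comment> \<open>\<open>\<gamma> / 2\<close> lies in neither neighbourhood, so \<open>w\<close> cannot pass from one to the other.\<close>
    have "\<exists>x. t0 \<le> x \<and> x \<le> t \<and> w x = \<gamma> / 2"
    proof (rule IVT2)
      show "w t \<le> \<gamma> / 2" "\<gamma> / 2 \<le> w t0"
        using \<open>w t < \<rho>\<close> \<open>\<bar>w t0 - \<gamma>\<bar> < \<rho>\<close> \<rho>(2) by auto
      show "\<forall>x. t0 \<le> x \<and> x \<le> t \<longrightarrow> isCont w x"
      proof (intro allI impI)
        fix x assume "t0 \<le> x \<and> x \<le> t"
        then have "T0 \<le> x"
          using near[of x] \<open>T \<le> t0\<close> by auto
        then show "isCont w x"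
          by (rule DERIV_isCont[OF DERIV_w])
      qed
    qed fact
    then obtain x where "t0 \<le> x" "w x = \<gamma> / 2"
      by blast
    then show False
      using near[of x] \<open>T \<le> t0\<close> \<rho>(2) by auto
  qed
  then show "eventually (\<lambda>t. dist (w t) \<gamma> < \<epsilon>) at_top"
    using \<rho>(4) unfolding dist_real_def by (intro eventually_at_top_linorderI[of t0]) force
qed

end

lemma damped_oscillator_tendsto_equilibrium:
  fixes w w' w'' L g :: "real \<Rightarrow> real" and a \<alpha> k p \<gamma> :: real
  assumes "0 < a" "0 < \<alpha>" "0 < k" "1 < p" "0 < \<gamma>" "k * \<gamma> powr (p - 1) = \<alpha>"
    and L: "(L \<longlongrightarrow> k) at_top" and g: "(g \<longlongrightarrow> 0) at_top"
    and solution: "eventually (\<lambda>t. (w has_real_derivative w' t) (at t) \<and>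
      (w' has_real_derivative w'' t) (at t) \<and> 0 < w t \<and>
      w'' t + a * w' t - \<alpha> * w t + L t * w t powr p + g t = 0) at_top"
    and limsup_pos: "0 < Limsup at_top (\<lambda>t. ereal (w t))"
    and limsup_fin: "Limsup at_top (\<lambda>t. ereal (w t)) < \<infinity>"
  shows "(w \<longlongrightarrow> \<gamma>) at_top \<and> (w' \<longlongrightarrow> 0) at_top"
proof -
  obtain M0 where "Limsup at_top (\<lambda>t. ereal (w t)) < ereal M0"
    using ereal_dense2[OF limsup_fin] by blast
  then have "eventually (\<lambda>t. ereal (w t) < ereal M0) at_top"
    by (rule Limsup_lessD)
  then have bounded: "eventually (\<lambda>t. w t < M0) at_top"
    by simp
  obtain y0 where y0: "0 < ereal y0" "ereal y0 < Limsup at_top (\<lambda>t. ereal (w t))"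
    using ereal_dense2[OF limsup_pos] by blast
  have "0 < y0"
    using y0(1) by simp
  have "\<exists>\<^sub>F t in at_top. y0 < w t"
    using frequently_less_of_less_Limsup[OF y0(2)] by simp
  define e where "e t = (k - L t) * w t powr p - g t" for t
  have "((\<lambda>t. k - L t) \<longlongrightarrow> 0) at_top"
    using tendsto_diff[OF tendsto_const[of k] L] by simp
  moreover have "eventually (\<lambda>t. 0 < w t \<and> w t < M0) at_top"
    using solution bounded by eventually_elim simp
  ultimately have "((\<lambda>t. (k - L t) * w t powr p) \<longlongrightarrow> 0) at_top"
    using \<open>1 < p\<close> by (intro tendsto_zero_mult_powr_bounded) auto
  then have "(e \<longlongrightarrow> 0) at_top"
    unfolding e_def using tendsto_diff[OF _ g] by fastforce
  then have "eventually (\<lambda>t. \<bar>e t\<bar> \<le> 1) at_top"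
    using tendstoD[of e 0 at_top 1] by (auto elim!: eventually_mono)
  then have "eventually (\<lambda>t. ((w has_real_derivative w' t) (at t) \<and>
      (w' has_real_derivative w'' t) (at t) \<and> 0 < w t \<and>
      w'' t + a * w' t - \<alpha> * w t + L t * w t powr p + g t = 0) \<and> w t < M0 \<and> \<bar>e t\<bar> \<le> 1) at_top"
    by (rule eventually_conj[OF solution eventually_conj[OF bounded]])
  then obtain T0 where T0: "\<forall>t\<ge>T0. ((w has_real_derivative w' t) (at t) \<and>
      (w' has_real_derivative w'' t) (at t) \<and> 0 < w t \<and>
      w'' t + a * w' t - \<alpha> * w t + L t * w t powr p + g t = 0) \<and> w t < M0 \<and> \<bar>e t\<bar> \<le> 1"
    unfolding eventually_at_top_linorder by (elim exE)
  interpret damped_oscillator w w' w'' e a \<alpha> k p "max M0 (\<gamma> + 1)" \<gamma> T0 y0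
  proof
    fix t assume "T0 \<le> t"
    note sol = T0[rule_format, OF this]
    show "(w has_real_derivative w' t) (at t)" "(w' has_real_derivative w'' t) (at t)"
      "0 < w t" "w t \<le> max M0 (\<gamma> + 1)" "\<bar>e t\<bar> \<le> 1"
      using sol by auto
    show "w'' t = - a * w' t + (\<alpha> * w t - k * w t powr p) + e t"
      using sol unfolding e_def by (simp add: algebra_simps)
  qed (use assms \<open>0 < y0\<close> \<open>\<exists>\<^sub>F t in at_top. y0 < w t\<close> \<open>(e \<longlongrightarrow> 0) at_top\<close> in auto)
  show ?thesis
    using w_tendsto_equilibrium velocity_tendsto_zero by simp
qed

section \<open>The transformed radial equation\<close>

lemma supercritical_exponent:
  assumes "3 \<le> N" "-2 < \<beta>" "pS N \<beta> < p"
  shows "1 < p" and "0 < theta_t \<beta> p" and "2 * theta_t \<beta> p < real N - 2"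
proof -
  have "1 \<le> real N - 2"
    using assms(1) by simp
  moreover have "1 * (real N - 2) < real N + 2 + 2 * \<beta>"
    using assms(2) by simp
  ultimately have "1 < pS N \<beta>"
    unfolding pS_def by (simp add: less_divide_eq)
  then show "1 < p"
    using assms(3) by simp
  then show "0 < theta_t \<beta> p"
    unfolding theta_t_def using assms(2) by simp
  have "real N + 2 + 2 * \<beta> < p * (real N - 2)"
    using assms(3) \<open>1 \<le> real N - 2\<close> unfolding pS_def by (simp add: divide_less_eq)
  then have "2 * (2 + \<beta>) < (real N - 2) * (p - 1)"
    by (simp add: algebra_simps)
  then show "2 * theta_t \<beta> p < real N - 2"
    unfolding theta_t_def using \<open>1 < p\<close> by (simp add: pos_divide_less_eq mult.commute)
qed

lemma gamma_t_equilibrium: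
  assumes "0 < kinf" "1 < p" "0 < A_t N \<beta> p"
  shows "0 < gamma_t N \<beta> p kinf"
    and "kinf * gamma_t N \<beta> p kinf powr (p - 1) = A_t N \<beta> p powr (p - 1)"
proof -
  show "0 < gamma_t N \<beta> p kinf"
    unfolding gamma_t_def using assms by simp
  have "gamma_t N \<beta> p kinf powr (p - 1) = kinf powr (- 1) * A_t N \<beta> p powr (p - 1)"
    unfolding gamma_t_def using assms by (simp add: powr_mult powr_powr)
  then show "kinf * gamma_t N \<beta> p kinf powr (p - 1) = A_t N \<beta> p powr (p - 1)"
    using assms(1) by (simp add: powr_minus)
qed

lemma L_t_tendsto:
  assumes "((\<lambda>r. K r / r powr \<beta>) \<longlongrightarrow> kinf) at_top"
  shows "((\<lambda>t. L_t K \<beta> t) \<longlongrightarrow> kinf) at_top"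
proof -
  have "((\<lambda>t. K (exp t) / exp t powr \<beta>) \<longlongrightarrow> kinf) at_top"
    by (rule filterlim_compose[OF assms exp_at_top])
  moreover have "K (exp t) / exp t powr \<beta> = L_t K \<beta> t" for t
    unfolding L_t_def powr_def by (simp add: exp_minus divide_inverse mult.commute)
  ultimately show ?thesis
    by simp
qed

lemma g_t_tendsto_zero:
  assumes "f \<in> O[at_top](\<lambda>r. r powr (- q))" "2 + theta_t \<beta> p < q"
  shows "((\<lambda>t. g_t f \<beta> p t) \<longlongrightarrow> 0) at_top"
proof -
  obtain C where "eventually (\<lambda>r. norm (f r) \<le> C * norm (r powr (- q))) at_top"
    using landau_o.bigE[OF assms(1)] by blast
  then have "eventually (\<lambda>t. norm (f (exp t)) \<le> C * norm (exp t powr (- q))) at_top"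
    by (rule eventually_compose_filterlim[OF _ exp_at_top])
  then have "eventually (\<lambda>t. \<bar>f (exp t)\<bar> \<le> C * exp (- q * t)) at_top"
    by (simp add: powr_def)
  then have "eventually (\<lambda>t. norm (g_t f \<beta> p t) \<le> C * exp ((2 + theta_t \<beta> p - q) * t)) at_top"
  proof eventually_elim
    case (elim t)
    have "norm (g_t f \<beta> p t) = exp ((2 + theta_t \<beta> p) * t) * \<bar>f (exp t)\<bar>"
      unfolding g_t_def by (simp add: abs_mult)
    also have "\<dots> \<le> exp ((2 + theta_t \<beta> p) * t) * (C * exp (- q * t))"
      using elim by (intro mult_left_mono) auto
    also have "\<dots> = C * exp ((2 + theta_t \<beta> p - q) * t)"
      by (simp add: exp_add[symmetric] algebra_simps)
    finally show ?case .
  qed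
  moreover have "((\<lambda>t. C * exp ((2 + theta_t \<beta> p - q) * t)) \<longlongrightarrow> 0) at_top"
    using assms(2) by real_asymp
  ultimately show ?thesis
    by (rule Lim_null_comparison)
qed

theorem lemma6p8:
  fixes N :: nat and \<beta> kinf q p \<mu> t\<^sub>1 :: real
    and K f w w' w'' :: "real \<Rightarrow> real"
  assumes N3: "N \<ge> 3"
    and mu: "\<mu> \<ge> 0"
    and K_cont: "continuous_on {0<..} K"
    and K_pos: "\<And>r. r > 0 \<Longrightarrow> K r > 0"
    and beta: "\<beta> > -2"
    and kinf_pos: "kinf > 0"
    and K_asym: "((\<lambda>r. K r / r powr \<beta>) \<longlongrightarrow> kinf) at_top"
    and f_cont: "continuous_on {0<..} f"
    and f_nonneg: "\<And>r. r > 0 \<Longrightarrow> f r \<ge> 0"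
    and q: "q > real N"
    and f_decay: "f \<in> O[at_top](\<lambda>r. r powr (- q))"
    and p: "p > pS N \<beta>"
    and w1: "\<And>t. t > t\<^sub>1 \<Longrightarrow> (w has_real_derivative w' t) (at t)"
    and w2: "\<And>t. t > t\<^sub>1 \<Longrightarrow> (w' has_real_derivative w'' t) (at t)"
    and w2_cont: "continuous_on {t\<^sub>1<..} w''"
    and w_pos: "\<And>t. t > t\<^sub>1 \<Longrightarrow> w t > 0"
    and ode: "\<And>t. t > t\<^sub>1 \<Longrightarrow>
        w'' t + a_t N \<beta> p * w' t - (A_t N \<beta> p) powr (p - 1) * w t
        + L_t K \<beta> t * (w t) powr p + \<mu> * g_t f \<beta> p t = 0"
    and limsup_pos: "Limsup at_top (\<lambda>t. ereal (w t)) > 0"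
    and limsup_fin: "Limsup at_top (\<lambda>t. ereal (w t)) < \<infinity>"
  shows "(w \<longlongrightarrow> gamma_t N \<beta> p kinf) at_top \<and> (w' \<longlongrightarrow> 0) at_top"
proof -
  note exponent = supercritical_exponent[OF N3 beta p]
  have "0 < theta_t \<beta> p * c_t N \<beta> p"
    using exponent unfolding a_t_def c_t_def by simp
  then have "0 < A_t N \<beta> p"
    unfolding A_t_def powr_gt_zero by linarith
  note equilibrium = gamma_t_equilibrium[OF kinf_pos exponent(1) this]
  have "0 < a_t N \<beta> p"
    using exponent unfolding a_t_def by simp
  have "0 < A_t N \<beta> p powr (p - 1)"
    using \<open>0 < A_t N \<beta> p\<close> by simp
  have "2 + theta_t \<beta> p < q"
    using exponent q by simp
  then have "((\<lambda>t. \<mu> * g_t f \<beta> p t) \<longlongrightarrow> 0) at_top"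
    by (intro tendsto_mult_right_zero g_t_tendsto_zero[OF f_decay])
  moreover have "eventually (\<lambda>t. (w has_real_derivative w' t) (at t) \<and>
      (w' has_real_derivative w'' t) (at t) \<and> 0 < w t \<and>
      w'' t + a_t N \<beta> p * w' t - A_t N \<beta> p powr (p - 1) * w t
        + L_t K \<beta> t * w t powr p + \<mu> * g_t f \<beta> p t = 0) at_top"
    using eventually_gt_at_top[of t\<^sub>1] by eventually_elim (simp add: w1 w2 w_pos ode)
  ultimately show ?thesis
    by (rule damped_oscillator_tendsto_equilibrium[OF \<open>0 < a_t N \<beta> p\<close> \<open>0 < A_t N \<beta> p powr (p - 1)\<close>
          kinf_pos exponent(1) equilibrium L_t_tendsto[OF K_asym] _ _ limsup_pos limsup_fin])
qed

end
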